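(* Let $w$ be a non-binary word. Then every element of $\mathtt{BR}(w)$ is rich if and only if either $w = a_1a_2\cdots a_k$ where $a_1,\dots,a_k\in\Sigma$ are pairwise distinct letters, or $w = c^{|w|}$ for a single letter $c\in\Sigma$.
   Context: $\Sigma$ is an alphabet; $\Sigma^*$ is the set of finite words over $\Sigma$. For a word $w=w_1\cdots w_n$ ($w_i\in\Sigma$), $|w|=n$ and $w^R=w_n\cdots w_1$; $w$ is a palindrome if $w=w^R$. A factor of $w$ is a word $u$ with $w=puq$ for some words $p,q$. A word $w$ is rich if the number of distinct nonempty palindromic factors of $w$ equals $|w|$ (the maximum possible). $\mathrm{Alph}(w)$ denotes the set of letters occurring in $w$. The block reversal of a nonempty word $w$ is $\mathtt{BR}(w)=\{B_tB_{t-1}\cdots B_1 : w=B_1B_2\cdots B_t,\ t\ge 1,\ B_i\in\Sigma^+\}$. A non-binary word is a nonempty word $w$ with $|\mathrm{Alph}(w)|\neq 2$. *)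

theory Defs
  imports Main "HOL-Library.Sublist"
begin

text \<open>Words over the alphabet 'a are lists. Factors are contiguous sublists.\<close>

definition pal_factors :: "'a list \<Rightarrow> 'a list set" where
  "pal_factors w = {u. u \<noteq> [] \<and> sublist u w \<and> rev u = u}"

definition rich :: "'a list \<Rightarrow> bool" where
  "rich w \<longleftrightarrow> card (pal_factors w) = length w"

definition block_reversal :: "'a list \<Rightarrow> 'a list set" where
  "block_reversal w = {concat (rev Bs) | Bs. Bs \<noteq> [] \<and> concat Bs = w \<and> (\<forall>B\<in>set Bs. B \<noteq> [])}"

definition non_binary :: "'a list \<Rightarrow> bool" where
  "non_binary w \<longleftrightarrow> w \<noteq> [] \<and> card (set w) \<noteq> 2"

end

theory Submission
  imports Defs
begin

text \<open>Appending a letter to a word creates at most one new palindromic factor, namely its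
  longest palindromic suffix: a shorter palindromic suffix is also a prefix of it and so occurs
  earlier. Hence every factor of a rich word is rich, and a complete return \<open>y m y\<close>
  (\<open>y \<notin> m\<close>) with \<open>m\<close> not a palindrome is not rich, since its last letter creates
  nothing new. Words with pairwise distinct letters and powers of a letter are rich, and block
  reversal preserves both shapes.

  Conversely, if \<open>w\<close> has at least three letters and a repeated one, take a shortest factor
  \<open>u\<close> with these two properties. Deleting the first or the last letter of \<open>u\<close> destroys
  them, which leaves only the shapes \<open>f m f\<close> with \<open>f m\<close> distinct, four-letter words with one
  repeated letter, and \<open>f r\<^sup>k l\<close>; each has a block reversal containing a non-palindromic
  complete return. Finally, a block reversal \<open>v\<close> of \<open>u\<close> in \<open>w = p u s\<close> extends to the block
  reversal \<open>s v p\<close> of \<open>w\<close>.\<close>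

lemma finite_pal_factors: "finite (pal_factors v)"
  by (rule finite_subset[of _ "set (sublists v)"]) (auto simp: pal_factors_def)

lemma pal_factors_Nil [simp]: "pal_factors [] = {}"
  by (auto simp: pal_factors_def)

lemma pal_factors_rev: "pal_factors (rev v) = rev ` pal_factors v"
proof -
  have "pal_factors (rev v) = rev ` rev ` pal_factors (rev v)"
    by (simp add: image_image)
  also have "rev ` pal_factors (rev v) = pal_factors v"
    by (force simp: pal_factors_def sublist_rev_right)
  finally show ?thesis .
qed

lemma card_pal_factors_rev [simp]: "card (pal_factors (rev v)) = card (pal_factors v)"
  by (simp add: pal_factors_rev card_image inj_on_def)

lemma palindrome_suffix_sublist_butlast:
  assumes "rev s = s" "rev t = t" "suffix s t" "s \<noteq> t"
  shows "sublist s (butlast t)"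
proof -
  obtain x where t: "t = x @ s" and "x \<noteq> []"
    using assms(3,4) by (auto simp: suffix_def)
  have "t = s @ rev x"
    using assms(1,2) t by (metis rev_append)
  then show ?thesis
    using \<open>x \<noteq> []\<close> by (simp add: butlast_append)
qed

lemma new_pal_factors_snoc_unique:
  assumes s1: "s1 \<in> pal_factors (v @ [z]) - pal_factors v"
    and s2: "s2 \<in> pal_factors (v @ [z]) - pal_factors v"
    and "length s1 \<le> length s2"
  shows "s1 = s2"
proof (rule ccontr)
  assume "s1 \<noteq> s2"
  have suf1: "suffix s1 (v @ [z])" and suf2: "suffix s2 (v @ [z])" and "s2 \<noteq> []"
    using s1 s2 by (auto simp: pal_factors_def sublist_snoc)
  then have "suffix s1 s2"
    using suffix_length_suffix \<open>length s1 \<le> length s2\<close> by blast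
  then have "sublist s1 (butlast s2)"
    using s1 s2 \<open>s1 \<noteq> s2\<close> by (intro palindrome_suffix_sublist_butlast) (auto simp: pal_factors_def)
  moreover have "sublist (butlast s2) v"
  proof -
    obtain x where "v @ [z] = x @ s2"
      using suf2 by (auto simp: suffix_def)
    then have "v = x @ butlast s2"
      using \<open>s2 \<noteq> []\<close> by (metis butlast_append butlast_snoc)
    then show ?thesis
      by simp
  qed
  ultimately have "sublist s1 v"
    by (rule sublist_order.order_trans)
  then have "s1 \<in> pal_factors v"
    using s1 by (simp add: pal_factors_def)
  then show False
    using s1 by blast
qed

lemma card_pal_factors_snoc_le: "card (pal_factors (v @ [z])) \<le> Suc (card (pal_factors v))"
proof -
  let ?N = "pal_factors (v @ [z]) - pal_factors v"
  have "s1 = s2" if "s1 \<in> ?N" "s2 \<in> ?N" for s1 s2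
    using new_pal_factors_snoc_unique[OF that] new_pal_factors_snoc_unique[OF that(2,1)]
    by (cases "length s1 \<le> length s2") auto
  then have "card ?N \<le> Suc 0"
    by (simp add: card_le_Suc0_iff_eq finite_pal_factors)
  moreover have "card (pal_factors (v @ [z])) \<le> card (pal_factors v \<union> ?N)"
    by (rule card_mono) (auto simp: finite_pal_factors)
  moreover have "card (pal_factors v \<union> ?N) \<le> card (pal_factors v) + card ?N"
    by (rule card_Un_le)
  ultimately show ?thesis
    by simp
qed

lemma card_pal_factors_append_le:
  "card (pal_factors (u @ s)) \<le> card (pal_factors u) + length s"
proof (induction s rule: rev_induct)
  case (snoc z s)
  then show ?case
    using card_pal_factors_snoc_le[of "u @ s" z] by simp
qed simp

lemma card_pal_factors_le_length: "card (pal_factors u) \<le> length u"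
  using card_pal_factors_append_le[of "[]" u] by simp

lemma card_pal_factors_sublist:
  assumes "sublist u v"
  shows "card (pal_factors v) + length u \<le> card (pal_factors u) + length v"
proof -
  obtain p s where v: "v = p @ u @ s"
    using assms by (auto simp: sublist_def)
  have "card (pal_factors v) = card (pal_factors (rev (rev (u @ s) @ rev p)))"
    using v by simp
  also have "\<dots> = card (pal_factors (rev (u @ s) @ rev p))"
    by (rule card_pal_factors_rev)
  also have "\<dots> \<le> card (pal_factors (rev (u @ s))) + length (rev p)"
    by (rule card_pal_factors_append_le)
  also have "\<dots> = card (pal_factors (u @ s)) + length p"
    by (simp only: card_pal_factors_rev length_rev)
  also have "\<dots> \<le> card (pal_factors u) + length s + length p"
    using card_pal_factors_append_le[of u s] by simp
  finally show ?thesis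
    using v by simp
qed

lemma rich_iff_length_le: "rich w \<longleftrightarrow> length w \<le> card (pal_factors w)"
  using card_pal_factors_le_length[of w] by (auto simp: rich_def)

lemma rich_sublist: "rich v \<Longrightarrow> sublist u v \<Longrightarrow> rich u"
  using card_pal_factors_sublist[of u v] by (simp add: rich_iff_length_le)

lemma pal_factors_return_subset:
  assumes "y \<notin> set m" "rev m \<noteq> m"
  shows "pal_factors (y # m @ [y]) \<subseteq> pal_factors (y # m)"
proof
  fix u
  assume u: "u \<in> pal_factors (y # m @ [y])"
  then have "u \<noteq> []" "rev u = u"
    by (auto simp: pal_factors_def)
  show "u \<in> pal_factors (y # m)"
  proof (cases "sublist u (y # m)")
    case False
    then have "suffix u ((y # m) @ [y])"
      using u sublist_snoc[of u "y # m" y] by (auto simp: pal_factors_def)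
    then obtain x where x: "y # m @ [y] = x @ u"
      by (auto simp: suffix_def)
    have "last u = y"
      using x \<open>u \<noteq> []\<close> by (metis last_appendR last_snoc append_Cons)
    then obtain u' where u': "u = y # u'"
      using \<open>u \<noteq> []\<close> \<open>rev u = u\<close> by (metis hd_rev list.exhaust_sel)
    show ?thesis
    proof (cases x)
      case Nil
      then show ?thesis
        using x \<open>rev u = u\<close> assms(2) by auto
    next
      case (Cons a x')
      then have "m @ [y] = x' @ y # u'"
        using x u' by auto
      then have "u' = []"
        using assms(1) by (cases u' rule: rev_exhaust) auto
      then show ?thesis
        using u' by (auto simp: pal_factors_def)
    qed
  qed (use u in \<open>auto simp: pal_factors_def\<close>)
qed

lemma not_rich_return:
  assumes "y \<notin> set m" "rev m \<noteq> m"
  shows "\<not> rich (y # m @ [y])"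
proof -
  have "card (pal_factors (y # m @ [y])) \<le> card (pal_factors (y # m))"
    using pal_factors_return_subset[OF assms] by (rule card_mono[OF finite_pal_factors])
  also have "\<dots> < length (y # m @ [y])"
    using card_pal_factors_le_length[of "y # m"] by simp
  finally show ?thesis
    by (simp add: rich_def)
qed

definition has_nonpal_return :: "'a list \<Rightarrow> bool" where
  "has_nonpal_return v \<longleftrightarrow> (\<exists>y m. sublist (y # m @ [y]) v \<and> y \<notin> set m \<and> rev m \<noteq> m)"

lemma not_rich_if_has_nonpal_return: "has_nonpal_return v \<Longrightarrow> \<not> rich v"
  unfolding has_nonpal_return_def by (metis rich_sublist not_rich_return)

lemma has_nonpal_return_sublist:
  assumes "has_nonpal_return u" "sublist u v"
  shows "has_nonpal_return v"
proof -
  obtain y m where "sublist (y # m @ [y]) u" "y \<notin> set m" "rev m \<noteq> m"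
    using assms(1) by (auto simp: has_nonpal_return_def)
  with sublist_order.order_trans[OF _ assms(2)] show ?thesis
    by (auto simp: has_nonpal_return_def)
qed

lemma singletons_subset_pal_factors: "(\<lambda>x. [x]) ` set v \<subseteq> pal_factors v"
  by (auto simp: pal_factors_def sublist_def dest: split_list)

lemma rich_if_distinct:
  assumes "distinct v"
  shows "rich v"
proof -
  have "length v = card ((\<lambda>x. [x]) ` set v)"
    using assms by (subst card_image) (auto simp: inj_on_def distinct_card)
  also have "\<dots> \<le> card (pal_factors v)"
    by (rule card_mono[OF finite_pal_factors singletons_subset_pal_factors])
  finally show ?thesis
    by (simp add: rich_iff_length_le)
qed

lemma rich_replicate: "rich (replicate n c)"
proof -
  have "replicate k c \<in> pal_factors (replicate n c)" if "k \<in> {1..n}" for k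
  proof -
    have "replicate n c = replicate k c @ replicate (n - k) c"
      using that by (simp flip: replicate_add)
    then have "sublist (replicate k c) (replicate n c)"
      by (metis sublist_append_rightI)
    then show ?thesis
      using that by (simp add: pal_factors_def)
  qed
  then have "(\<lambda>k. replicate k c) ` {1..n} \<subseteq> pal_factors (replicate n c)"
    by blast
  from card_mono[OF finite_pal_factors this] show ?thesis
    by (simp add: rich_iff_length_le card_image inj_on_def)
qed

lemma concat_rev_in_block_reversal:
  assumes "concat Bs = w" "[] \<notin> set Bs" "Bs \<noteq> []"
  shows "concat (rev Bs) \<in> block_reversal w"
  using assms unfolding block_reversal_def by blast

lemma concat_filter_neq_Nil: "concat (filter (\<lambda>xs. xs \<noteq> []) xss) = concat xss"
  by (induction xss) auto

lemma block_reversal_append_sides: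
  assumes "v \<in> block_reversal u"
  shows "s @ v @ p \<in> block_reversal (p @ u @ s)"
proof -
  obtain Bs where Bs: "v = concat (rev Bs)" "concat Bs = u" "[] \<notin> set Bs" "Bs \<noteq> []"
    using assms unfolding block_reversal_def by blast
  let ?Cs = "filter (\<lambda>B. B \<noteq> []) (p # Bs @ [s])"
  have "concat ?Cs = p @ u @ s"
    using Bs(2) by (simp only: concat_filter_neq_Nil) simp
  moreover have "concat (rev ?Cs) = s @ v @ p"
    using Bs(1) by (simp only: rev_filter concat_filter_neq_Nil) simp
  moreover have "?Cs \<noteq> []"
    using Bs(3,4) by (cases Bs) auto
  ultimately show ?thesis
    using concat_rev_in_block_reversal[of ?Cs] by simp
qed

lemma block_reversal_set_length:
  assumes "v \<in> block_reversal w"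
  shows "set v = set w" "length v = length w"
proof -
  obtain Bs where "v = concat (rev Bs)" "concat Bs = w"
    using assms unfolding block_reversal_def by blast
  then show "set v = set w" "length v = length w"
    by (auto simp: length_concat rev_map[symmetric] sum_list_rev)
qed

lemma nonpal_return_in_block_reversal_sublist:
  assumes "sublist u w" and "\<exists>v\<in>block_reversal u. has_nonpal_return v"
  shows "\<exists>v\<in>block_reversal w. has_nonpal_return v"
proof -
  obtain v where v: "v \<in> block_reversal u" "has_nonpal_return v"
    using assms(2) by blast
  obtain p s where "w = p @ u @ s"
    using assms(1) by (auto simp: sublist_def)
  then have "s @ v @ p \<in> block_reversal w"
    using block_reversal_append_sides[OF v(1)] by simp
  moreover have "has_nonpal_return (s @ v @ p)"
    by (rule has_nonpal_return_sublist[OF v(2) sublist_appendI])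
  ultimately show ?thesis
    by blast
qed

lemma rev_neq_if_distinct:
  assumes "distinct m" "2 \<le> length m"
  shows "rev m \<noteq> m"
proof
  assume "rev m = m"
  obtain a m' where m: "m = a # m'"
    using assms(2) by (cases m) auto
  with assms(2) have "m' \<noteq> []"
    by auto
  have "last m = hd m"
    by (metis hd_rev \<open>rev m = m\<close>)
  then have "last m' = a"
    using \<open>m' \<noteq> []\<close> m by simp
  then show False
    using assms(1) m \<open>m' \<noteq> []\<close> by auto
qed

lemma ex_block_reversal_nonpal_returnI:
  assumes "concat Bs = u" "[] \<notin> set Bs"
    and "sublist (y # m @ [y]) (concat (rev Bs))" "y \<notin> set m" "rev m \<noteq> m"
  shows "\<exists>v\<in>block_reversal u. has_nonpal_return v"
proof -
  have "Bs \<noteq> []"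
    using assms(3) by auto
  then show ?thesis
    using assms concat_rev_in_block_reversal by (auto simp: has_nonpal_return_def)
qed

lemma nonpal_return_in_block_reversal_first_repeated:
  assumes "3 \<le> card (set (f # M @ [l]))" "distinct (M @ [l])" "f \<in> set M"
    and "card (set (f # M)) < 3"
  shows "\<exists>v\<in>block_reversal (f # M @ [l]). has_nonpal_return v"
proof -
  have "length M = 2"
    using assms by (auto simp: insert_absorb distinct_card)
  then obtain a b where M: "M = [a, b]"
    by (auto simp: length_Suc_conv numeral_2_eq_2)
  then have "f = a \<or> f = b" "a \<noteq> b" "l \<noteq> a" "l \<noteq> b"
    using assms(2,3) by auto
  then show ?thesis
  proof (elim disjE conjE)
    assume "f = a" "a \<noteq> b" "l \<noteq> a" "l \<noteq> b"
    then show ?thesis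
      using ex_block_reversal_nonpal_returnI[of "[[a], [a, b, l]]" _ a "[b, l]"] M by auto
  next
    assume "f = b" "a \<noteq> b" "l \<noteq> a" "l \<noteq> b"
    then show ?thesis
      using ex_block_reversal_nonpal_returnI[of "[[b], [a], [b, l]]" _ b "[l, a]"] M by auto
  qed
qed

lemma nonpal_return_in_block_reversal_last_repeated:
  assumes "3 \<le> card (set (f # M @ [l]))" "distinct (f # M)" "l \<in> set M"
    and "card (set (M @ [l])) < 3"
  shows "\<exists>v\<in>block_reversal (f # M @ [l]). has_nonpal_return v"
proof -
  have "length M = 2"
    using assms by (auto simp: insert_absorb distinct_card)
  then obtain a b where M: "M = [a, b]"
    by (auto simp: length_Suc_conv numeral_2_eq_2)
  then have "l = a \<or> l = b" "a \<noteq> b" "f \<noteq> a" "f \<noteq> b"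
    using assms(2,3) by auto
  then show ?thesis
  proof (elim disjE conjE)
    assume "l = a" "a \<noteq> b" "f \<noteq> a" "f \<noteq> b"
    then show ?thesis
      using ex_block_reversal_nonpal_returnI[of "[[f, a], [b], [a]]" _ a "[b, f]"] M by auto
  next
    assume "l = b" "a \<noteq> b" "f \<noteq> a" "f \<noteq> b"
    then show ?thesis
      using ex_block_reversal_nonpal_returnI[of "[[f, a, b], [b]]" _ b "[f, a]"] M by auto
  qed
qed

lemma nonpal_return_in_block_reversal_inner_power:
  assumes "3 \<le> card (set (f # M @ [l]))" "\<not> distinct M" "card (set (M @ [l])) < 3"
    and "f \<notin> set (M @ [l])" "l \<notin> set (f # M)"
  shows "\<exists>v\<in>block_reversal (f # M @ [l]). has_nonpal_return v"
proof -
  have "card (set M) = 1"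
    using assms(1,3,4,5) by simp
  then obtain r where "set M = {r}"
    using card_1_singletonE by blast
  moreover have "2 \<le> length M"
    using assms(2) \<open>card (set M) = 1\<close> card_length[of M] card_distinct[of M]
    by (cases "length M = 1") auto
  then obtain k where "length M = Suc (Suc k)"
    by (metis add_2_eq_Suc le_Suc_ex)
  ultimately have M: "M = r # replicate k r @ [r]"
    using replicate_length_same[of M r] by (simp add: replicate_append_same)
  show ?thesis
    using ex_block_reversal_nonpal_returnI[of "[f # r # replicate k r, [r, l]]" _ r "[l, f]"]
      M assms(4,5) by auto
qed

lemma nonpal_return_in_block_reversal_minimal:
  assumes card: "3 \<le> card (set (f # M @ [l]))" and nd: "\<not> distinct (f # M @ [l])"
    and tl_min: "3 \<le> card (set (M @ [l])) \<Longrightarrow> distinct (M @ [l])"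
    and butlast_min: "3 \<le> card (set (f # M)) \<Longrightarrow> distinct (f # M)"
  shows "\<exists>v\<in>block_reversal (f # M @ [l]). has_nonpal_return v"
proof -
  consider "f \<in> set (M @ [l])" "l \<in> set (f # M)" | "f \<in> set (M @ [l])" "l \<notin> set (f # M)"
    | "f \<notin> set (M @ [l])" "l \<in> set (f # M)" | "f \<notin> set (M @ [l])" "l \<notin> set (f # M)"
    by blast
  then show ?thesis
  proof cases
    case 1
    then have "set (M @ [l]) = set (f # M @ [l])" "set (f # M) = set (f # M @ [l])"
      by auto
    then have "distinct (M @ [l])" "distinct (f # M)"
      using card tl_min butlast_min by simp_all
    then have "f = l" "2 \<le> length M"
      using 1 card \<open>set (f # M) = set (f # M @ [l])\<close> by (auto simp: distinct_card)
    moreover have "rev M \<noteq> M"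
      using \<open>distinct (f # M)\<close> \<open>2 \<le> length M\<close> by (simp add: rev_neq_if_distinct)
    ultimately show ?thesis
      using ex_block_reversal_nonpal_returnI[of "[f # M @ [l]]" _ f M] \<open>distinct (f # M)\<close>
      by simp
  next
    case 2
    then have "distinct (M @ [l])" "f \<in> set M"
      using card tl_min by (auto simp: insert_absorb)
    moreover from this have "card (set (f # M)) < 3"
      using butlast_min not_le by auto
    ultimately show ?thesis
      by (rule nonpal_return_in_block_reversal_first_repeated[OF card])
  next
    case 3
    then have "distinct (f # M)" "l \<in> set M"
      using card butlast_min by (auto simp: insert_absorb)
    moreover from this have "card (set (M @ [l])) < 3"
      using tl_min not_le by auto
    ultimately show ?thesis
      by (rule nonpal_return_in_block_reversal_last_repeated[OF card])
  next
    case 4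
    then have "\<not> distinct M"
      using nd by auto
    moreover from this have "card (set (M @ [l])) < 3"
      using tl_min not_le by auto
    ultimately show ?thesis
      using 4 by (rule nonpal_return_in_block_reversal_inner_power[OF card])
  qed
qed

lemma distinct_block_reversal: "v \<in> block_reversal w \<Longrightarrow> distinct w \<Longrightarrow> distinct v"
  using block_reversal_set_length by (metis card_distinct distinct_card)

lemma block_reversal_replicate: "v \<in> block_reversal (replicate n c) \<Longrightarrow> v = replicate n c"
  using block_reversal_set_length[of v] replicate_length_same[of v c]
  by (cases "n = 0") auto

lemma ex_shortest_sublist:
  assumes "P w"
  obtains u where "sublist u w" "P u" "\<And>u'. sublist u' u \<Longrightarrow> length u' < length u \<Longrightarrow> \<not> P u'"
proof -
  obtain u where u: "sublist u w" "P u"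
    and least: "\<And>u'. sublist u' w \<Longrightarrow> P u' \<Longrightarrow> length u \<le> length u'"
    using ex_has_least_nat[of "\<lambda>u. sublist u w \<and> P u" w length] assms by auto
  have shorter: "\<not> P u'" if "sublist u' u" "length u' < length u" for u'
    using least[OF sublist_order.order_trans[OF that(1) u(1)]] that(2) by auto
  show thesis
    by (rule that[OF u shorter])
qed

lemma nonpal_return_in_block_reversal:
  assumes "3 \<le> card (set w)" "\<not> distinct w"
  shows "\<exists>v\<in>block_reversal w. has_nonpal_return v"
proof -
  define P :: "'a list \<Rightarrow> bool" where "P u \<longleftrightarrow> 3 \<le> card (set u) \<and> \<not> distinct u" for u
  have "P w"
    using assms by (simp add: P_def)
  obtain u where "sublist u w" "P u" and min: "\<And>u'. sublist u' u \<Longrightarrow> length u' < length u \<Longrightarrow> \<not> P u'"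
    using ex_shortest_sublist[of P w] \<open>P w\<close> by metis
  then have u: "3 \<le> card (set u)" "\<not> distinct u"
    by (simp_all add: P_def)
  have "3 \<le> length u"
    using u card_length[of u] by linarith
  then obtain f u' where "u = f # u'"
    by (cases u) auto
  moreover obtain M l where "u' = M @ [l]"
    using \<open>3 \<le> length u\<close> calculation by (cases u' rule: rev_exhaust) auto
  ultimately have fMl: "u = f # M @ [l]"
    by simp
  have "sublist (M @ [l]) u" "sublist (f # M) u"
    using sublist_append_leftI[of "M @ [l]" "[f]"] sublist_append_rightI[of "f # M" "[l]"] fMl
    by simp_all
  then have "\<not> P (M @ [l])" "\<not> P (f # M)"
    using min fMl by auto
  then have "3 \<le> card (set (M @ [l])) \<Longrightarrow> distinct (M @ [l])"
    and "3 \<le> card (set (f # M)) \<Longrightarrow> distinct (f # M)"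
    by (simp_all add: P_def)
  moreover have "3 \<le> card (set (f # M @ [l]))" "\<not> distinct (f # M @ [l])"
    using u fMl by simp_all
  ultimately have "\<exists>v\<in>block_reversal u. has_nonpal_return v"
    using nonpal_return_in_block_reversal_minimal[of f M l] fMl by blast
  then show ?thesis
    using nonpal_return_in_block_reversal_sublist[OF \<open>sublist u w\<close>] by blast
qed

theorem mainTheorem1:
  fixes w :: "'a list"
  assumes "non_binary w"
  shows "(\<forall>v\<in>block_reversal w. rich v) \<longleftrightarrow>
         (distinct w \<or> (\<exists>c. w = replicate (length w) c))"
proof
  assume all_rich: "\<forall>v\<in>block_reversal w. rich v"
  show "distinct w \<or> (\<exists>c. w = replicate (length w) c)"
  proof (rule ccontr)
    assume "\<not> (distinct w \<or> (\<exists>c. w = replicate (length w) c))"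
    then have "\<not> distinct w" "card (set w) \<noteq> 1"
      by (auto simp: card_set_1_iff_replicate)
    moreover have "w \<noteq> []" "card (set w) \<noteq> 2"
      using assms by (simp_all add: non_binary_def)
    ultimately have "3 \<le> card (set w)"
      by (cases "card (set w)") (auto simp: eval_nat_numeral)
    then obtain v where "v \<in> block_reversal w" "has_nonpal_return v"
      using nonpal_return_in_block_reversal \<open>\<not> distinct w\<close> by blast
    then show False
      using all_rich not_rich_if_has_nonpal_return by blast
  qed
next
  assume "distinct w \<or> (\<exists>c. w = replicate (length w) c)"
  then show "\<forall>v\<in>block_reversal w. rich v"
    by (metis distinct_block_reversal rich_if_distinct block_reversal_replicate rich_replicate)
qed

end
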